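(* $\mathsf{COH}$ admits fairness preservation. That is, for all $A_0,A_1\subseteq2^{<\omega}$, every set $C$ fair for $A_0,A_1$, and every uniformly $C$-computable sequence $\vec R$, there is an $\vec R$-cohesive set $G$ with $G\oplus C$ fair for $A_0,A_1$.
   Context: An infinite set $G$ is $\vec R$-cohesive if for each $i$, $G\subseteq^* R_i$ or $G\subseteq^*\overline{R_i}$ (inclusion up to finitely many elements). Strings are finite binary strings, and $\preceq$ is the prefix relation. Two strings are incomparable if neither is a prefix of the other. Matrices. An $m$-by-$n$ matrix $M$ is an array of strings $\sigma_{i,j}$ ($i<m$, $j<n$), with rows $M(i)=(\sigma_{i,0},\dots,\sigma_{i,n-1})$. It is disjoint if each row consists of pairwise incomparable strings. Formulas. An $m$-by-$n$ formula is a formula with distinguished finite-set variables $U_{i,j}$. It is $\Sigma^{0,X}_1$ if it is $\Sigma^0_1$ relative to $X$. Valuations. An $M$-valuation is a tuple $V=(B_{i,j})$ of finite sets $B_{i,j}\subseteq\{\tau:\tau\succeq\sigma_{i,j}\}$. We write $\varphi(V)$ for $\varphi$ evaluated at $U_{i,j}:=B_{i,j}$, and $V(i)=(B_{i,0},\dots,B_{i,n-1})$. We write $V>s$ if all strings occurring in $V$ have length $>s$. Essential. $\varphi$ is essential in $M$ if for every $s$ there is an $M$-valuation $V>s$ with $\varphi(V)$. Diagonalization. An $M$-valuation $V$ diagonalizes against $A_0,A_1$ if for every $i<m$ there are components $L,R$ of $V(i)$ with $L\subseteq A_0$ and $R\subseteq A_1$. Fairness. For $n\ge1$, a set $X$ is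 $n$-fair for $A_0,A_1$ if the following holds: for every $m$, every $\Sigma^{0,X}_1$ $m$-by-$2^nm$ formula $\varphi$, and every $m$-by-$2^nm$ disjoint matrix $M$ in which $\varphi$ is essential, there is an $M$-valuation $V$ diagonalizing against $A_0,A_1$ with $\varphi(V)$. The set $X$ is fair if it is $n$-fair for some $n\ge1$. *)

theory Defs
  imports Main "HOL-Library.Sublist" "HOL-Library.Nat_Bijection"
begin

text \<open>orec X n f: f is an n-ary total X-recursive function (arguments given as a list
  of length n).\<close>

inductive orec :: "nat set \<Rightarrow> nat \<Rightarrow> (nat list \<Rightarrow> nat) \<Rightarrow> bool" for X :: "nat set" where
  zero: "orec X n (\<lambda>_. 0)"
| succ: "orec X 1 (\<lambda>xs. Suc (hd xs))"
| proj: "i < n \<Longrightarrow> orec X n (\<lambda>xs. xs ! i)"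
| char_X: "orec X 1 (\<lambda>xs. if hd xs \<in> X then 1 else 0)"
| comp: "orec X m g \<Longrightarrow> length gs = m \<Longrightarrow> (\<forall>h\<in>set gs. orec X n h)
          \<Longrightarrow> orec X n (\<lambda>xs. g (map (\<lambda>h. h xs) gs))"
| prim_rec: "orec X n g \<Longrightarrow> orec X (n + 2) h
          \<Longrightarrow> orec X (n + 1) (\<lambda>xs. rec_nat (g (tl xs)) (\<lambda>k r. h (k # r # tl xs)) (hd xs))"
| mu: "orec X (n + 1) g \<Longrightarrow> (\<forall>xs. length xs = n \<longrightarrow> (\<exists>y. g (y # xs) = 0))
          \<Longrightarrow> orec X n (\<lambda>xs. LEAST y. g (y # xs) = 0)"

definition sigma1_rel :: "nat set \<Rightarrow> nat set \<Rightarrow> bool" where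
  "sigma1_rel X S \<longleftrightarrow> (\<exists>f. orec X 2 f \<and> (\<forall>x. x \<in> S \<longleftrightarrow> (\<exists>y. f [x, y] = 0)))"

definition unif_computable :: "nat set \<Rightarrow> (nat \<Rightarrow> nat set) \<Rightarrow> bool" where
  "unif_computable X R \<longleftrightarrow>
     (\<exists>f. orec X 2 f \<and> (\<forall>i x. f [i, x] = (if x \<in> R i then 1 else 0)))"

definition join :: "nat set \<Rightarrow> nat set \<Rightarrow> nat set" where
  "join G C = {2 * x | x. x \<in> G} \<union> {2 * x + 1 | x. x \<in> C}"

definition cohesive :: "(nat \<Rightarrow> nat set) \<Rightarrow> nat set \<Rightarrow> bool" where
  "cohesive R G \<longleftrightarrow> infinite G \<and> (\<forall>i. finite (G - R i) \<or> finite (G - (- R i)))"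

type_synonym str = "bool list"

text \<open>Explicit (computable) bijective coding of binary strings by naturals.\<close>
fun str_code :: "str \<Rightarrow> nat" where
  "str_code [] = 0"
| "str_code (b # s) = 2 * str_code s + (if b then 2 else 1)"

definition incomparable :: "str \<Rightarrow> str \<Rightarrow> bool" where
  "incomparable a b \<longleftrightarrow> \<not> prefix a b \<and> \<not> prefix b a"

text \<open>An m-by-n matrix is M :: nat \<Rightarrow> nat \<Rightarrow> str (entries i<m, j<n are relevant).\<close>
definition disjoint_matrix :: "nat \<Rightarrow> nat \<Rightarrow> (nat \<Rightarrow> nat \<Rightarrow> str) \<Rightarrow> bool" where
  "disjoint_matrix m n M \<longleftrightarrow>
     (\<forall>i<m. \<forall>j<n. \<forall>k<n. j \<noteq> k \<longrightarrow> incomparable (M i j) (M i k))"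

text \<open>A valuation V assigns to the variable U_{i,j} the set V i j.\<close>
definition valuation :: "nat \<Rightarrow> nat \<Rightarrow> (nat \<Rightarrow> nat \<Rightarrow> str) \<Rightarrow> (nat \<Rightarrow> nat \<Rightarrow> str set) \<Rightarrow> bool" where
  "valuation m n M V \<longleftrightarrow> (\<forall>i<m. \<forall>j<n. finite (V i j) \<and> V i j \<subseteq> {\<tau>. prefix (M i j) \<tau>})"

definition val_gt :: "nat \<Rightarrow> nat \<Rightarrow> (nat \<Rightarrow> nat \<Rightarrow> str set) \<Rightarrow> nat \<Rightarrow> bool" where
  "val_gt m n V s \<longleftrightarrow> (\<forall>i<m. \<forall>j<n. \<forall>\<tau>\<in>V i j. length \<tau> > s)"

definition val_code :: "nat \<Rightarrow> nat \<Rightarrow> (nat \<Rightarrow> nat \<Rightarrow> str set) \<Rightarrow> nat" where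
  "val_code m n V =
     list_encode (concat (map (\<lambda>i. map (\<lambda>j. set_encode (str_code ` V i j)) [0..<n]) [0..<m]))"

text \<open>An m-by-n Sigma^{0,X}_1 formula phi is represented by the Sigma^0_1(X) set S of codes
  of the tuples of finite sets satisfying it: phi(V) iff val_code m n V \<in> S.\<close>
definition holds :: "nat \<Rightarrow> nat \<Rightarrow> nat set \<Rightarrow> (nat \<Rightarrow> nat \<Rightarrow> str set) \<Rightarrow> bool" where
  "holds m n S V \<longleftrightarrow> val_code m n V \<in> S"

definition essential :: "nat \<Rightarrow> nat \<Rightarrow> nat set \<Rightarrow> (nat \<Rightarrow> nat \<Rightarrow> str) \<Rightarrow> bool" where
  "essential m n S M \<longleftrightarrow> (\<forall>s. \<exists>V. valuation m n M V \<and> val_gt m n V s \<and> holds m n S V)"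

definition diagonalizes :: "nat \<Rightarrow> nat \<Rightarrow> (nat \<Rightarrow> nat \<Rightarrow> str set) \<Rightarrow> str set \<Rightarrow> str set \<Rightarrow> bool" where
  "diagonalizes m n V A0 A1 \<longleftrightarrow> (\<forall>i<m. \<exists>L<n. \<exists>R<n. V i L \<subseteq> A0 \<and> V i R \<subseteq> A1)"

definition n_fair :: "nat \<Rightarrow> nat set \<Rightarrow> str set \<Rightarrow> str set \<Rightarrow> bool" where
  "n_fair k X A0 A1 \<longleftrightarrow>
     (\<forall>m S M. sigma1_rel X S \<longrightarrow> disjoint_matrix m (2 ^ k * m) M \<longrightarrow> essential m (2 ^ k * m) S M
        \<longrightarrow> (\<exists>V. valuation m (2 ^ k * m) M V \<and> diagonalizes m (2 ^ k * m) V A0 A1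
                 \<and> holds m (2 ^ k * m) S V))"

definition fair :: "nat set \<Rightarrow> str set \<Rightarrow> str set \<Rightarrow> bool" where
  "fair X A0 A1 \<longleftrightarrow> (\<exists>k\<ge>1. n_fair k X A0 A1)"

end

theory Submission
  imports Defs "HOL-Library.Countable"
begin

text \<open>\<open>G\<close> is built by Mathias forcing with conditions \<open>(F, Y)\<close>, \<open>F\<close> finite and \<open>Y\<close> infinite
  and \<open>C\<close>-computable; at stage \<open>s\<close> the reservoir is shrunk into \<open>R s\<close> or its complement, which
  gives cohesiveness. By the use principle, the matrix \<open>f\<close> of a \<open>\<Sigma>\<^sub>1\<close> formula \<open>\<phi>\<close> relative
  to \<open>G \<oplus> C\<close> is approximated by a \<open>C\<close>-computable function reading \<open>G \<inter> {..<u}\<close>. Hence the set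
  of codes forced into \<open>\<phi>\<close> by some extension of \<open>(F, Y)\<close> is \<open>\<Sigma>\<^sub>1\<close> relative to \<open>C\<close>, and it
  contains all codes satisfying \<open>\<phi>\<close>, so it is essential whenever \<open>\<phi>\<close> is. Fairness of \<open>C\<close>
  then yields a diagonalizing valuation together with an extension forcing it into \<open>\<phi>\<close>, and the
  construction takes that extension.\<close>

section \<open>Closure properties of oracle computability\<close>

text \<open>An \<open>orec\<close> function is only meaningful on argument lists of the right length;
  \<open>computable\<close> forgets its values elsewhere.\<close>

definition computable :: "nat set \<Rightarrow> nat \<Rightarrow> (nat list \<Rightarrow> nat) \<Rightarrow> bool" where
  "computable X n f \<longleftrightarrow> (\<exists>g. orec X n g \<and> (\<forall>xs. length xs = n \<longrightarrow> f xs = g xs))"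

lemma orec_imp_computable: "orec X n f \<Longrightarrow> computable X n f"
  unfolding computable_def by blast

lemma computable_cong:
  "computable X n f \<Longrightarrow> (\<And>xs. length xs = n \<Longrightarrow> f xs = f' xs) \<Longrightarrow> computable X n f'"
  unfolding computable_def by metis

lemma computable_zero: "computable X n (\<lambda>_. 0)"
  by (rule orec_imp_computable) (rule orec.zero)

lemma computable_proj: "i < n \<Longrightarrow> computable X n (\<lambda>xs. xs ! i)"
  by (rule orec_imp_computable) (rule orec.proj)

lemma computable_comp:
  assumes g: "computable X m g" and len: "length gs = m" and hs: "\<forall>h\<in>set gs. computable X n h"
  shows "computable X n (\<lambda>xs. g (map (\<lambda>h. h xs) gs))"
proof -
  obtain g0 where g0: "orec X m g0" "\<And>xs. length xs = m \<Longrightarrow> g xs = g0 xs"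
    using g unfolding computable_def by blast
  have "\<forall>h\<in>set gs. \<exists>h'. orec X n h' \<and> (\<forall>xs. length xs = n \<longrightarrow> h xs = h' xs)"
    using hs unfolding computable_def by blast
  from bchoice[OF this] obtain impl
    where impl: "\<forall>h\<in>set gs. orec X n (impl h) \<and> (\<forall>xs. length xs = n \<longrightarrow> h xs = impl h xs)"
    by blast
  have "orec X n (\<lambda>xs. g0 (map (\<lambda>h. h xs) (map impl gs)))"
    by (rule orec.comp[OF g0(1)]) (use len impl in auto)
  moreover have "g (map (\<lambda>h. h xs) gs) = g0 (map (\<lambda>h. h xs) (map impl gs))" if "length xs = n" for xs
  proof -
    have "map (\<lambda>h. h xs) gs = map (\<lambda>h. h xs) (map impl gs)"
      using impl that by (auto intro!: map_cong)
    then show ?thesis using g0(2) len by (metis length_map)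
  qed
  ultimately show ?thesis unfolding computable_def by blast
qed

lemma computable_prim_rec:
  assumes g: "computable X n g" and h: "computable X (n + 2) h"
  shows "computable X (n + 1) (\<lambda>xs. rec_nat (g (tl xs)) (\<lambda>k r. h (k # r # tl xs)) (hd xs))"
proof -
  obtain g0 where g0: "orec X n g0" "\<And>xs. length xs = n \<Longrightarrow> g xs = g0 xs"
    using g unfolding computable_def by blast
  obtain h0 where h0: "orec X (n + 2) h0" "\<And>xs. length xs = n + 2 \<Longrightarrow> h xs = h0 xs"
    using h unfolding computable_def by blast
  have "rec_nat (g (tl xs)) (\<lambda>k r. h (k # r # tl xs)) k
      = rec_nat (g0 (tl xs)) (\<lambda>k r. h0 (k # r # tl xs)) k" if "length xs = n + 1" for xs k
    using that by (induct k) (auto simp: g0(2) h0(2))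
  then show ?thesis unfolding computable_def using orec.prim_rec[OF g0(1) h0(1)] by blast
qed

lemma computable_comp1:
  "computable X 1 g \<Longrightarrow> computable X n a \<Longrightarrow> computable X n (\<lambda>xs. g [a xs])"
  using computable_comp[of X 1 g "[a]" n] by simp

lemma computable_comp2:
  "computable X 2 g \<Longrightarrow> computable X n a \<Longrightarrow> computable X n b \<Longrightarrow> computable X n (\<lambda>xs. g [a xs, b xs])"
  using computable_comp[of X 2 g "[a, b]" n] by (simp add: numeral_2_eq_2)

lemma computable_comp4:
  "computable X 4 g \<Longrightarrow> computable X n a \<Longrightarrow> computable X n b \<Longrightarrow> computable X n c \<Longrightarrow>
   computable X n d \<Longrightarrow> computable X n (\<lambda>xs. g [a xs, b xs, c xs, d xs])"
  using computable_comp[of X 4 g "[a, b, c, d]" n] by (simp add: eval_nat_numeral)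

lemma computable_reindex:
  assumes "computable X m g" "\<And>i. i < m \<Longrightarrow> idx i < n"
  shows "computable X n (\<lambda>xs. g (map (\<lambda>i. xs ! idx i) [0..<m]))"
  using computable_comp[OF assms(1), of "map (\<lambda>i xs. xs ! idx i) [0..<m]" n]
  by (simp add: comp_def assms(2) computable_proj)

lemma computable_Cons:
  assumes "computable X (Suc n) g" "computable X n t"
  shows "computable X n (\<lambda>xs. g (t xs # xs))"
proof -
  have "computable X n (\<lambda>xs. g (map (\<lambda>h. h xs) (t # map (\<lambda>i xs. xs ! i) [0..<n])))"
    by (rule computable_comp[OF assms(1)]) (auto intro: computable_proj assms(2))
  moreover have "map (\<lambda>i. xs ! i) [0..<n] = xs" if "length xs = n" for xs :: "nat list"
    using map_nth[of xs] that by simp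
  ultimately show ?thesis
    by (elim computable_cong) (simp add: comp_def)
qed

lemma computable_update:
  assumes "computable X n g" "i < n" "computable X n a"
  shows "computable X n (\<lambda>xs. g (xs[i := a xs]))"
proof -
  have "computable X n (\<lambda>xs. g (map (\<lambda>h. h xs) (map (\<lambda>j. if j = i then a else (\<lambda>xs. xs ! j)) [0..<n])))"
    by (rule computable_comp[OF assms(1)]) (auto intro: computable_proj assms(3))
  then show ?thesis
    by (rule computable_cong) (auto intro!: nth_equalityI arg_cong[where f = g] simp: nth_list_update)
qed

lemma computable_skip_arg1:
  assumes "computable X (Suc n) g"
  shows "computable X (n + 2) (\<lambda>zs. g (zs ! 0 # drop 2 zs))"
proof -
  have "computable X (n + 2) (\<lambda>zs. g (map (\<lambda>i. zs ! (if i = 0 then 0 else i + 1)) [0..<Suc n]))"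
    using assms by (rule computable_reindex) auto
  moreover have "map (\<lambda>i. zs ! (if i = 0 then 0 else i + 1)) [0..<Suc n] = zs ! 0 # drop 2 zs"
    if "length zs = n + 2" for zs :: "nat list"
    using that by (intro nth_equalityI) (auto simp: nth_Cons' add.commute simp del: upt_Suc)
  ultimately show ?thesis by (elim computable_cong) simp
qed

lemma computable_Suc:
  assumes "computable X n a"
  shows "computable X n (\<lambda>xs. Suc (a xs))"
proof -
  have "computable X 1 (\<lambda>xs. Suc (xs ! 0))"
    by (rule computable_cong[OF orec_imp_computable[OF orec.succ]]) (auto simp: length_Suc_conv)
  from computable_comp1[OF this assms] show ?thesis by simp
qed

lemma computable_const: "computable X n (\<lambda>_. c)"
  by (induct c) (auto intro: computable_zero computable_Suc)

lemma computable_rec1: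
  assumes "computable X 2 (\<lambda>xs. h (xs ! 0) (xs ! 1))"
  shows "computable X 1 (\<lambda>xs. rec_nat c h (xs ! 0))"
proof -
  have "computable X (0 + 1) (\<lambda>xs. rec_nat c (\<lambda>k r. h ((k # r # tl xs) ! 0) ((k # r # tl xs) ! 1)) (hd xs))"
    by (rule computable_prim_rec) (use assms computable_const in \<open>simp_all add: numeral_2_eq_2\<close>)
  then show ?thesis
    by (simp only: add_0) (elim computable_cong, auto simp: length_Suc_conv)
qed

lemma computable_rec2:
  assumes "computable X 1 (\<lambda>xs. g (xs ! 0))" "computable X 3 (\<lambda>xs. h (xs ! 0) (xs ! 1) (xs ! 2))"
  shows "computable X 2 (\<lambda>xs. rec_nat (g (xs ! 1)) (\<lambda>k r. h k r (xs ! 1)) (xs ! 0))"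
proof -
  have "computable X (1 + 1) (\<lambda>xs. rec_nat (g (tl xs ! 0))
      (\<lambda>k r. h ((k # r # tl xs) ! 0) ((k # r # tl xs) ! 1) ((k # r # tl xs) ! 2)) (hd xs))"
    by (rule computable_prim_rec) (use assms in \<open>simp_all add: numeral_3_eq_3\<close>)
  then show ?thesis
    by (simp only: one_add_one) (elim computable_cong, auto simp: length_Suc_conv numeral_2_eq_2)
qed

lemma computable_binop:
  assumes "computable X 2 (\<lambda>xs. F (xs ! 0) (xs ! 1))" "computable X n a" "computable X n b"
  shows "computable X n (\<lambda>xs. F (a xs) (b xs))"
  using computable_comp2[OF assms] by simp

lemma computable_unop:
  assumes "computable X 1 (\<lambda>xs. F (xs ! 0))" "computable X n a"
  shows "computable X n (\<lambda>xs. F (a xs))"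
  using computable_comp1[OF assms] by simp

lemma computable_add:
  assumes "computable X n a" "computable X n b"
  shows "computable X n (\<lambda>xs. a xs + b xs)"
proof (rule computable_binop[OF _ assms])
  have "rec_nat y (\<lambda>_ r. Suc r) x = x + y" for x y :: nat by (induct x) auto
  moreover have "computable X 2 (\<lambda>xs. rec_nat (xs ! 1) (\<lambda>_ r. Suc r) (xs ! 0))"
    using computable_rec2[of X "\<lambda>x. x" "\<lambda>_ r _. Suc r"] by (simp add: computable_proj computable_Suc)
  ultimately show "computable X 2 (\<lambda>xs. xs ! 0 + xs ! 1)" by simp
qed

lemma computable_pred:
  assumes "computable X n a"
  shows "computable X n (\<lambda>xs. a xs - 1)"
proof (rule computable_unop[OF _ assms])
  have "rec_nat 0 (\<lambda>k _. k) x = x - 1" for x :: nat by (cases x) auto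
  moreover have "computable X 1 (\<lambda>xs. rec_nat 0 (\<lambda>k _. k) (xs ! 0))"
    by (rule computable_rec1) (simp add: computable_proj)
  ultimately show "computable X 1 (\<lambda>xs. xs ! 0 - 1)" by simp
qed

lemma computable_diff:
  assumes "computable X n a" "computable X n b"
  shows "computable X n (\<lambda>xs. a xs - b xs)"
proof (rule computable_binop[where F = "\<lambda>x y. y - x", OF _ assms(2,1)])
  have "rec_nat y (\<lambda>_ r. r - 1) x = y - x" for x y :: nat by (induct x) auto
  moreover have "computable X 2 (\<lambda>xs. rec_nat (xs ! 1) (\<lambda>_ r. r - 1) (xs ! 0))"
    using computable_rec2[of X "\<lambda>x. x" "\<lambda>_ r _. r - 1"] computable_pred[OF computable_proj[of 1 3]]
    by (simp add: computable_proj)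
  ultimately show "computable X 2 (\<lambda>xs. xs ! 1 - xs ! 0)" by simp
qed

lemma computable_mult:
  assumes "computable X n a" "computable X n b"
  shows "computable X n (\<lambda>xs. a xs * b xs)"
proof (rule computable_binop[OF _ assms])
  have "rec_nat 0 (\<lambda>_ r. r + y) x = x * y" for x y :: nat by (induct x) auto
  moreover have "computable X 2 (\<lambda>xs. rec_nat 0 (\<lambda>_ r. r + xs ! 1) (xs ! 0))"
    using computable_rec2[of X "\<lambda>_. 0" "\<lambda>_ r y. r + y"]
    by (simp add: computable_proj computable_add computable_const)
  ultimately show "computable X 2 (\<lambda>xs. xs ! 0 * xs ! 1)" by simp
qed

lemma computable_mod2:
  assumes "computable X n a"
  shows "computable X n (\<lambda>xs. a xs mod 2)"
proof (rule computable_unop[OF _ assms])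
  have "rec_nat 0 (\<lambda>_ r. 1 - r) x = x mod 2" for x :: nat by (induct x) (auto simp: mod_Suc)
  moreover have "computable X 1 (\<lambda>xs. rec_nat 0 (\<lambda>_ r. 1 - r) (xs ! 0))"
    by (rule computable_rec1) (simp add: computable_proj computable_diff computable_const)
  ultimately show "computable X 1 (\<lambda>xs. xs ! 0 mod 2)" by simp
qed

lemma computable_div2:
  assumes "computable X n a"
  shows "computable X n (\<lambda>xs. a xs div 2)"
proof (rule computable_unop[OF _ assms])
  have "Suc x div 2 = x div 2 + x mod 2" for x :: nat by presburger
  then have "rec_nat 0 (\<lambda>k r. r + k mod 2) x = x div 2" for x :: nat by (induct x) auto
  moreover have "computable X 1 (\<lambda>xs. rec_nat 0 (\<lambda>k r. r + k mod 2) (xs ! 0))"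
    by (rule computable_rec1) (simp add: computable_proj computable_add computable_mod2)
  ultimately show "computable X 1 (\<lambda>xs. xs ! 0 div 2)" by simp
qed

lemma computable_div_power2:
  assumes "computable X n a" "computable X n b"
  shows "computable X n (\<lambda>xs. b xs div 2 ^ a xs)"
proof (rule computable_binop[where F = "\<lambda>x y. y div 2 ^ x", OF _ assms])
  have "rec_nat y (\<lambda>_ r. r div 2) x = y div 2 ^ x" for x y :: nat
    by (induct x) (simp_all add: power_Suc2 div_mult2_eq del: power_Suc)
  moreover have "computable X 2 (\<lambda>xs. rec_nat (xs ! 1) (\<lambda>_ r. r div 2) (xs ! 0))"
    using computable_rec2[of X "\<lambda>x. x" "\<lambda>_ r _. r div 2"] by (simp add: computable_proj computable_div2)
  ultimately show "computable X 2 (\<lambda>xs. xs ! 1 div 2 ^ (xs ! 0))" by simp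
qed

definition decidable :: "nat set \<Rightarrow> nat \<Rightarrow> (nat list \<Rightarrow> bool) \<Rightarrow> bool" where
  "decidable X n P \<longleftrightarrow> computable X n (\<lambda>xs. if P xs then 1 else 0)"

lemma decidable_cong:
  "decidable X n P \<Longrightarrow> (\<And>xs. length xs = n \<Longrightarrow> P xs = P' xs) \<Longrightarrow> decidable X n P'"
  unfolding decidable_def by (erule computable_cong) auto

lemma computable_If:
  assumes "decidable X n P" "computable X n a" "computable X n b"
  shows "computable X n (\<lambda>xs. if P xs then a xs else b xs)"
proof -
  let ?c = "\<lambda>xs. if P xs then 1 else 0 :: nat"
  have "computable X n (\<lambda>xs. ?c xs * a xs + (1 - ?c xs) * b xs)"
    using assms unfolding decidable_def
    by (intro computable_add computable_mult computable_diff computable_const)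
  then show ?thesis by (rule computable_cong) simp
qed

lemma decidable_eq:
  assumes "computable X n a" "computable X n b"
  shows "decidable X n (\<lambda>xs. a xs = b xs)"
proof -
  have "computable X n (\<lambda>xs. 1 - ((a xs - b xs) + (b xs - a xs)))"
    using assms by (intro computable_add computable_diff computable_const)
  then show ?thesis unfolding decidable_def by (rule computable_cong) auto
qed

lemma decidable_less:
  assumes "computable X n a" "computable X n b"
  shows "decidable X n (\<lambda>xs. a xs < b xs)"
proof -
  have "computable X n (\<lambda>xs. 1 - (1 - (b xs - a xs)))"
    using assms by (intro computable_diff computable_const)
  then show ?thesis unfolding decidable_def by (rule computable_cong) auto
qed

lemma decidable_not:
  assumes "decidable X n P"
  shows "decidable X n (\<lambda>xs. \<not> P xs)"
  using computable_If[OF assms computable_const computable_const, of 0 1]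
  unfolding decidable_def by (rule computable_cong) auto

lemma decidable_conj:
  assumes "decidable X n P" "decidable X n Q"
  shows "decidable X n (\<lambda>xs. P xs \<and> Q xs)"
  using computable_If[OF assms(1) assms(2)[unfolded decidable_def] computable_const, of 0]
  unfolding decidable_def by (rule computable_cong) auto

lemma decidable_disj:
  assumes "decidable X n P" "decidable X n Q"
  shows "decidable X n (\<lambda>xs. P xs \<or> Q xs)"
  using decidable_not[OF decidable_conj[OF decidable_not[OF assms(1)] decidable_not[OF assms(2)]]]
  by simp

lemma decidable_imp:
  assumes "decidable X n P" "decidable X n Q"
  shows "decidable X n (\<lambda>xs. P xs \<longrightarrow> Q xs)"
  using decidable_disj[OF decidable_not[OF assms(1)] assms(2)] by simp

lemma decidable_True: "decidable X n (\<lambda>_. True)"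
  unfolding decidable_def using computable_const[of X n 1] by simp

lemma decidable_unop:
  assumes "decidable X 1 (\<lambda>xs. P (xs ! 0))" "computable X n a"
  shows "decidable X n (\<lambda>xs. P (a xs))"
  using computable_unop[OF assms[unfolded decidable_def]] unfolding decidable_def .

lemma decidable_mem_oracle:
  assumes "computable X n a"
  shows "decidable X n (\<lambda>xs. a xs \<in> X)"
  using computable_comp1[OF orec_imp_computable[OF orec.char_X] assms]
  unfolding decidable_def by simp

lemma decidable_even:
  assumes "computable X n a"
  shows "decidable X n (\<lambda>xs. even (a xs))"
  using decidable_eq[OF computable_mod2[OF assms] computable_const, of 0]
  by (rule decidable_cong) auto

lemma decidable_mem_set_decode:
  assumes "computable X n a" "computable X n b"
  shows "decidable X n (\<lambda>xs. a xs \<in> set_decode (b xs))"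
  using decidable_not[OF decidable_even[OF computable_div_power2[OF assms]]]
  by (rule decidable_cong) (simp add: set_decode_def)

lemma decidable_mem_finite:
  assumes "finite F" "computable X n a"
  shows "decidable X n (\<lambda>xs. a xs \<in> F)"
  using decidable_mem_set_decode[OF assms(2) computable_const, of "set_encode F"] assms(1) by simp

lemma sigma1_rel_decidable:
  assumes "decidable X 2 Q"
  shows "sigma1_rel X {x. \<exists>w. Q [x, w]}"
proof -
  from computable_If[OF assms computable_const computable_const, of 0 1]
  obtain g where "orec X 2 g" "\<And>xs. length xs = 2 \<Longrightarrow> g xs = 0 \<longleftrightarrow> Q xs"
    unfolding computable_def by (metis one_neq_zero)
  then show ?thesis unfolding sigma1_rel_def by (intro exI[of _ g]) auto
qed

lemma decidable_all_nonzero: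
  assumes "\<forall>h\<in>set hs. computable X n (F h)"
  shows "decidable X n (\<lambda>xs. \<forall>h\<in>set hs. F h xs \<noteq> 0)"
  using assms
proof (induct hs)
  case Nil
  then show ?case using decidable_True by simp
next
  case (Cons h hs)
  then have "decidable X n (\<lambda>xs. F h xs \<noteq> 0 \<and> (\<forall>h\<in>set hs. F h xs \<noteq> 0))"
    by (intro decidable_conj decidable_not decidable_eq computable_const) auto
  then show ?case by simp
qed

lemma decidable_bex:
  assumes P: "decidable X (Suc n) P" and t: "computable X n t"
  shows "decidable X n (\<lambda>xs. \<exists>y<t xs. P (y # xs))"
proof -
  have "decidable X (n + 2) (\<lambda>zs. P (zs ! 0 # drop 2 zs))"
    using computable_skip_arg1 P unfolding decidable_def by blast
  then have step: "computable X (n + 2) (\<lambda>zs. if P (zs ! 0 # drop 2 zs) then 1 else zs ! Suc 0)"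
    by (intro computable_If computable_proj computable_const) auto
  let ?B = "\<lambda>xs. rec_nat 0 (\<lambda>k r. if P (k # tl xs) then 1 else r) (hd xs)"
  have B: "computable X (n + 1) ?B"
    using computable_prim_rec[OF computable_const[of X n 0] step] by (simp cong: if_cong)
  have "computable X n (\<lambda>xs. ?B (t xs # xs))"
    using computable_Cons[OF B[simplified] t] by simp
  moreover have B_eq: "rec_nat 0 (\<lambda>k r. if P (k # xs) then 1 else r) y = (if \<exists>y'<y. P (y' # xs) then 1 else 0)"
    for y xs by (induct y) (auto simp: less_Suc_eq)
  ultimately show ?thesis unfolding decidable_def by (elim computable_cong) (simp only: B_eq list.sel)
qed

lemma decidable_ball:
  assumes "decidable X (Suc n) P" "computable X n t"
  shows "decidable X n (\<lambda>xs. \<forall>y<t xs. P (y # xs))"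
  using decidable_not[OF decidable_bex[OF decidable_not[OF assms(1)] assms(2)]] by simp

section \<open>The use principle for computations relative to \<open>G \<oplus> C\<close>\<close>

definition initial_code :: "nat set \<Rightarrow> nat \<Rightarrow> nat" where
  "initial_code G u = set_encode (G \<inter> {..<u})"

lemma set_decode_initial_code [simp]: "set_decode (initial_code G u) = G \<inter> {..<u}"
  unfolding initial_code_def by (simp add: set_encode_inverse)

text \<open>\<open>A\<close> approximates \<open>f\<close> relative to \<open>G\<close> if, reading the arguments of \<open>f\<close>
  followed by a code of \<open>G \<inter> {..<u}\<close> and \<open>u\<close>, it answers either \<open>0\<close> (no verdict) or
  \<open>f\<close> plus one, and gives the verdict for all large \<open>u\<close>.\<close>

definition approximates :: "nat set \<Rightarrow> nat \<Rightarrow> (nat list \<Rightarrow> nat) \<Rightarrow> (nat list \<Rightarrow> nat) \<Rightarrow> bool" where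
  "approximates G n f A \<longleftrightarrow> (\<forall>xs. length xs = n \<longrightarrow>
     (\<forall>u. A (xs @ [initial_code G u, u]) = 0 \<or> A (xs @ [initial_code G u, u]) = Suc (f xs)) \<and>
     (\<forall>\<^sub>F u in sequentially. A (xs @ [initial_code G u, u]) = Suc (f xs)))"

lemma approximatesD:
  assumes "approximates G n f A" "length xs = n"
  shows "A (xs @ [initial_code G u, u]) = 0 \<or> A (xs @ [initial_code G u, u]) = Suc (f xs)"
    and "\<forall>\<^sub>F u in sequentially. A (xs @ [initial_code G u, u]) = Suc (f xs)"
  using assms unfolding approximates_def by blast+

lemma approximates_cong:
  "approximates G n f A \<Longrightarrow> (\<And>xs. length xs = n + 2 \<Longrightarrow> A xs = A' xs) \<Longrightarrow> approximates G n f A'"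
  unfolding approximates_def by simp

lemma mem_join_iff: "q \<in> join G C \<longleftrightarrow> (if even q then q div 2 \<in> G else q div 2 \<in> C)"
proof -
  have "q \<in> {2 * x |x. x \<in> G} \<longleftrightarrow> even q \<and> q div 2 \<in> G" by auto
  moreover have "q \<in> {2 * x + 1 |x. x \<in> C} \<longleftrightarrow> odd q \<and> q div 2 \<in> C" by (auto elim!: oddE)
  ultimately show ?thesis unfolding join_def by auto
qed

lemma join_char_approximable:
  "\<exists>A. computable C 3 A \<and> approximates G 1 (\<lambda>xs. if hd xs \<in> join G C then 1 else 0) A"
proof (intro exI conjI)
  let ?A = "\<lambda>ys. if even (ys ! 0)
    then (if ys ! 0 div 2 < ys ! 2 then (if ys ! 0 div 2 \<in> set_decode (ys ! 1) then 2 else 1) else 0)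
    else (if ys ! 0 div 2 \<in> C then 2 else 1)"
  have half: "computable C 3 (\<lambda>ys. ys ! 0 div 2)"
    by (simp add: computable_div2 computable_proj)
  show "computable C 3 ?A"
    by (intro computable_If decidable_even decidable_less decidable_mem_set_decode
        decidable_mem_oracle half computable_proj computable_const) simp_all
  show "approximates G 1 (\<lambda>xs. if hd xs \<in> join G C then 1 else 0) ?A"
    unfolding approximates_def eventually_sequentially
  proof (intro allI impI conjI)
    fix xs :: "nat list" assume "length xs = 1"
    then obtain q where xs: "xs = [q]" by (auto simp: length_Suc_conv)
    show "?A (xs @ [initial_code G u, u]) = 0 \<or>
        ?A (xs @ [initial_code G u, u]) = Suc (if hd xs \<in> join G C then 1 else 0)" for u
      by (auto simp: xs mem_join_iff)
    show "\<exists>N. \<forall>u\<ge>N. ?A (xs @ [initial_code G u, u]) = Suc (if hd xs \<in> join G C then 1 else 0)"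
      by (rule exI[of _ "Suc (q div 2)"]) (auto simp: xs mem_join_iff)
  qed
qed

lemma approximates_comp:
  assumes Ag: "computable C (m + 2) Ag" "approximates G m g Ag" and len: "length gs = m"
    and hs: "\<forall>h\<in>set gs. \<exists>Ah. computable C (n + 2) Ah \<and> approximates G n h Ah"
  shows "\<exists>A. computable C (n + 2) A \<and> approximates G n (\<lambda>xs. g (map (\<lambda>h. h xs) gs)) A"
proof -
  obtain Ah where Ah: "\<forall>h\<in>set gs. computable C (n + 2) (Ah h) \<and> approximates G n h (Ah h)"
    using bchoice[OF hs] by blast
  define A where "A ys = (if \<forall>h\<in>set gs. Ah h ys \<noteq> 0
    then Ag (map (\<lambda>h. Ah h ys - 1) gs @ [ys ! n, ys ! (n + 1)]) else 0)" for ys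
  have "computable C (n + 2) (\<lambda>ys. Ag (map (\<lambda>h. h ys) (map (\<lambda>h ys. Ah h ys - 1) gs @ [\<lambda>ys. ys ! n, \<lambda>ys. ys ! (n + 1)])))"
    by (rule computable_comp[OF Ag(1)]) (use Ah len in \<open>auto intro!: computable_pred[simplified] computable_proj\<close>)
  then have "computable C (n + 2) A"
    unfolding A_def using Ah
    by (intro computable_If decidable_all_nonzero computable_const) (auto simp: comp_def)
  moreover have "approximates G n (\<lambda>xs. g (map (\<lambda>h. h xs) gs)) A"
    unfolding approximates_def
  proof (intro allI impI conjI)
    fix xs :: "nat list" assume xs: "length xs = n"
    let ?ys = "\<lambda>u. xs @ [initial_code G u, u]"
    have A_eq: "A (?ys u) = Ag (map (\<lambda>h. h xs) gs @ [initial_code G u, u])"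
      if "\<forall>h\<in>set gs. Ah h (?ys u) = Suc (h xs)" for u
      using that xs by (simp add: A_def nth_append cong: map_cong)
    have lg: "length (map (\<lambda>h. h xs) gs) = m" using len by simp
    show "A (?ys u) = 0 \<or> A (?ys u) = Suc (g (map (\<lambda>h. h xs) gs))" for u
    proof (cases "\<forall>h\<in>set gs. Ah h (?ys u) \<noteq> 0")
      case True
      then have "\<forall>h\<in>set gs. Ah h (?ys u) = Suc (h xs)"
        using Ah xs approximatesD(1) by blast
      then show ?thesis using A_eq approximatesD(1)[OF Ag(2) lg] by simp
    qed (auto simp: A_def)
    have "\<forall>\<^sub>F u in sequentially. \<forall>h\<in>set gs. Ah h (?ys u) = Suc (h xs)"
      using Ah xs approximatesD(2) by (intro eventually_ball_finite) auto
    then show "\<forall>\<^sub>F u in sequentially. A (?ys u) = Suc (g (map (\<lambda>h. h xs) gs))"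
      using approximatesD(2)[OF Ag(2) lg] by eventually_elim (simp add: A_eq)
  qed
  ultimately show ?thesis by blast
qed

lemma rec_nat_verdicts:
  assumes base: "\<And>u. v u = 0 \<or> v u = Suc c" "\<forall>\<^sub>F u in sequentially. v u = Suc c"
    and step: "\<And>u j r. B u j r = 0 \<or> B u j r = Suc (h j r)"
      "\<And>j r. \<forall>\<^sub>F u in sequentially. B u j r = Suc (h j r)"
  defines "V u \<equiv> rec_nat (v u) (\<lambda>j r. if r = 0 then 0 else B u j (r - 1))"
  shows "(\<forall>u. V u j = 0 \<or> V u j = Suc (rec_nat c h j))
    \<and> (\<forall>\<^sub>F u in sequentially. V u j = Suc (rec_nat c h j))"
proof (induct j)
  case 0
  show ?case using base by (simp add: V_def)
next
  case (Suc j)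
  have V_Suc: "V u (Suc j) = (if V u j = 0 then 0 else B u j (V u j - 1))" for u
    by (simp add: V_def)
  have "V u (Suc j) = 0 \<or> V u (Suc j) = Suc (rec_nat c h (Suc j))" for u
  proof -
    from Suc have "V u j = 0 \<or> V u j = Suc (rec_nat c h j)" by blast
    then show ?thesis using step(1)[of u j "rec_nat c h j"] by (auto simp: V_Suc)
  qed
  moreover have "\<forall>\<^sub>F u in sequentially. V u (Suc j) = Suc (rec_nat c h (Suc j))"
    using conjunct2[OF Suc] step(2)[of j "rec_nat c h j"] by eventually_elim (simp add: V_Suc)
  ultimately show ?case by blast
qed

lemma approximates_prim_rec:
  assumes Ag: "computable C (n + 2) Ag" "approximates G n g Ag"
    and Ah: "computable C (n + 2 + 2) Ah" "approximates G (n + 2) h Ah"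
  shows "\<exists>A. computable C (n + 1 + 2) A \<and>
    approximates G (n + 1) (\<lambda>xs. rec_nat (g (tl xs)) (\<lambda>k r. h (k # r # tl xs)) (hd xs)) A"
proof -
  define H where "H = (\<lambda>zs. if zs ! 1 = 0 then 0 else Ah (zs[1 := zs ! 1 - 1]))"
  have H: "computable C (n + 2 + 2) H"
    unfolding H_def
    by (intro computable_If decidable_eq computable_update[OF Ah(1)] computable_pred computable_proj
        computable_const) simp_all
  let ?A = "\<lambda>ys. rec_nat (Ag (tl ys)) (\<lambda>k r. H (k # r # tl ys)) (hd ys)"
  let ?f = "\<lambda>xs. rec_nat (g (tl xs)) (\<lambda>k r. h (k # r # tl xs)) (hd xs)"
  from computable_prim_rec[OF Ag(1) H] have "computable C (n + 1 + 2) ?A"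
    by simp
  moreover have "approximates G (n + 1) ?f ?A"
    unfolding approximates_def
  proof (intro allI impI)
    fix xs :: "nat list" assume "length xs = n + 1"
    then obtain k rest where xs: "xs = k # rest" and rest: "length rest = n" by (cases xs) auto
    have lj: "length (j # r # rest) = n + 2" for j r using rest by simp
    have H_eq: "H (j # r # rest @ [initial_code G u, u])
        = (if r = 0 then 0 else Ah ((j # (r - 1) # rest) @ [initial_code G u, u]))" for j r u
      by (cases r) (simp_all add: H_def)
    show "(\<forall>u. ?A (xs @ [initial_code G u, u]) = 0 \<or> ?A (xs @ [initial_code G u, u]) = Suc (?f xs))
        \<and> (\<forall>\<^sub>F u in sequentially. ?A (xs @ [initial_code G u, u]) = Suc (?f xs))"
      using rec_nat_verdicts[OF approximatesD[OF Ag(2) rest] approximatesD[OF Ah(2) lj], where j = k]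
      by (simp add: xs H_eq)
  qed
  ultimately show ?thesis by blast
qed

text \<open>Scanning the verdicts \<open>a 0, a 1, \<dots>\<close> of an approximation, \<open>a y = 1\<close> means that
  \<open>y\<close> is a zero and \<open>a y \<ge> 2\<close> that it is not; the search gives up with \<open>1\<close> at the first
  missing verdict, returns \<open>y + 2\<close> at the first zero \<open>y\<close>, and \<open>0\<close> if none is found below \<open>k\<close>.\<close>

definition bounded_search :: "(nat \<Rightarrow> nat) \<Rightarrow> nat \<Rightarrow> nat" where
  "bounded_search a k = rec_nat 0
     (\<lambda>y r. if r = 0 then (if a y = 0 then 1 else if a y = 1 then y + 2 else 0) else r) k"

lemma bounded_search_eq_0_iff: "bounded_search a k = 0 \<longleftrightarrow> (\<forall>y<k. 2 \<le> a y)"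
  by (induct k) (auto simp: bounded_search_def less_Suc_eq)

lemma bounded_search_eq_Suc_Suc_iff:
  "bounded_search a k = Suc (Suc y) \<longleftrightarrow> y < k \<and> a y = 1 \<and> (\<forall>y'<y. 2 \<le> a y')"
proof (induct k)
  case 0
  then show ?case by (simp add: bounded_search_def)
next
  case (Suc k)
  have step: "bounded_search a (Suc k) = (if bounded_search a k = 0
      then (if a k = 0 then 1 else if a k = 1 then k + 2 else 0) else bounded_search a k)"
    by (simp add: bounded_search_def)
  show ?case
  proof (cases "bounded_search a k = 0")
    case True
    then have "\<forall>y<k. 2 \<le> a y" by (simp add: bounded_search_eq_0_iff)
    then show ?thesis using True step Suc.hyps by (auto simp: less_Suc_eq)
  next
    case False
    then have "\<not> (\<forall>y<k. 2 \<le> a y)" by (simp add: bounded_search_eq_0_iff)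
    then show ?thesis using False step Suc.hyps by (auto simp: less_Suc_eq)
  qed
qed

lemma bounded_search_verdict:
  assumes verdict: "\<And>y. a y = 0 \<or> a y = Suc (g y)"
  shows "bounded_search a k - 1 = 0 \<or> bounded_search a k - 1 = Suc (LEAST y. g y = 0)"
proof (cases "bounded_search a k")
  case (Suc r)
  show ?thesis
  proof (cases r)
    case (Suc y)
    with \<open>bounded_search a k = Suc r\<close> have found: "a y = 1" "\<forall>y'<y. 2 \<le> a y'"
      using bounded_search_eq_Suc_Suc_iff by blast+
    have "(LEAST y. g y = 0) = y"
    proof (rule Least_equality)
      show "g y = 0" using verdict[of y] found(1) by simp
      show "y \<le> y'" if "g y' = 0" for y'
      proof (rule ccontr)
        assume "\<not> y \<le> y'"
        then have "2 \<le> a y'" using found(2) by simp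
        then show False using verdict[of y'] that by simp
      qed
    qed
    then show ?thesis using \<open>bounded_search a k = Suc r\<close> Suc by simp
  qed (simp add: \<open>bounded_search a k = Suc r\<close>)
qed simp

lemma bounded_search_eventually_verdict:
  assumes verdict: "\<And>y. \<forall>\<^sub>F u in sequentially. a u y = Suc (g y)" and zero: "g y0 = 0"
  shows "\<forall>\<^sub>F u in sequentially. bounded_search (a u) u - 1 = Suc (LEAST y. g y = 0)"
proof -
  define L where "L = (LEAST y. g y = 0)"
  have gL: "g L = 0" unfolding L_def using zero by (rule LeastI)
  have below_L: "g y \<noteq> 0" if "y < L" for y using not_less_Least that unfolding L_def by blast
  have "\<forall>\<^sub>F u in sequentially. \<forall>y\<in>{..L}. a u y = Suc (g y)"
    using verdict by (intro eventually_ball_finite) auto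
  then show ?thesis
    using eventually_gt_at_top[of L]
  proof eventually_elim
    case (elim u)
    then have "bounded_search (a u) u = Suc (Suc L)"
      unfolding bounded_search_eq_Suc_Suc_iff using gL below_L by (auto simp: Suc_le_eq)
    then show ?case by (simp add: L_def)
  qed
qed

lemma approximates_mu:
  assumes Ag: "computable C (n + 1 + 2) Ag" "approximates G (n + 1) g Ag"
    and regular: "\<forall>xs. length xs = n \<longrightarrow> (\<exists>y. g (y # xs) = 0)"
  shows "\<exists>A. computable C (n + 2) A \<and> approximates G n (\<lambda>xs. LEAST y. g (y # xs) = 0) A"
proof -
  have Ag': "computable C (n + 2 + 2) (\<lambda>ws. Ag (ws ! 0 # drop 2 ws))"
    using computable_skip_arg1[of C "n + 2" Ag] Ag(1) by simp
  define H where "H = (\<lambda>ws. if ws ! 1 = 0 then (if Ag (ws ! 0 # drop 2 ws) = 0 then 1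
    else if Ag (ws ! 0 # drop 2 ws) = 1 then ws ! 0 + 2 else 0) else ws ! 1)"
  have H: "computable C (n + 2 + 2) H"
    unfolding H_def by (intro computable_If decidable_eq Ag' computable_proj computable_const computable_add) simp_all
  have H_search: "rec_nat 0 (\<lambda>k r. H (k # r # zs)) k = bounded_search (\<lambda>y. Ag (y # zs)) k" for k zs
    by (induct k) (simp_all add: H_def bounded_search_def)
  define A where "A = (\<lambda>zs. bounded_search (\<lambda>y. Ag (y # zs)) (zs ! (n + 1)) - 1)"
  from computable_prim_rec[OF computable_const H]
  have "computable C (Suc (n + 2)) (\<lambda>xs. rec_nat 0 (\<lambda>k r. H (k # r # tl xs)) (hd xs))"
    by simp
  from computable_pred[OF computable_Cons[OF this computable_proj[of "n + 1"]]]
  have "computable C (n + 2) A"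
    by (simp add: A_def H_search)
  moreover have "approximates G n (\<lambda>xs. LEAST y. g (y # xs) = 0) A"
    unfolding approximates_def
  proof (intro allI impI conjI)
    fix xs :: "nat list" assume xs: "length xs = n"
    define a where "a u = (\<lambda>y. Ag ((y # xs) @ [initial_code G u, u]))" for u
    have A_xs: "A (xs @ [initial_code G u, u]) = bounded_search (a u) u - 1" for u
      using xs by (simp add: A_def a_def nth_append)
    have ly: "length (y # xs) = n + 1" for y using xs by simp
    show "A (xs @ [initial_code G u, u]) = 0 \<or> A (xs @ [initial_code G u, u]) = Suc (LEAST y. g (y # xs) = 0)" for u
      unfolding A_xs using approximatesD(1)[OF Ag(2) ly] unfolding a_def by (rule bounded_search_verdict)
    obtain y0 where "g (y0 # xs) = 0" using regular xs by blast
    with approximatesD(2)[OF Ag(2) ly]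
    show "\<forall>\<^sub>F u in sequentially. A (xs @ [initial_code G u, u]) = Suc (LEAST y. g (y # xs) = 0)"
      unfolding A_xs a_def by (rule bounded_search_eventually_verdict)
  qed
  ultimately show ?thesis by blast
qed

theorem orec_join_approximable:
  "orec (join G C) n f \<Longrightarrow> \<exists>A. computable C (n + 2) A \<and> approximates G n f A"
proof (induction rule: orec.induct)
  case (zero n)
  have "approximates G n (\<lambda>_. 0) (\<lambda>_. 1)" unfolding approximates_def by simp
  then show ?case using computable_const by blast
next
  case succ
  have "computable C (1 + 2) (\<lambda>ys. Suc (Suc (ys ! 0)))"
    by (intro computable_Suc computable_proj) simp
  moreover have "approximates G 1 (\<lambda>xs. Suc (hd xs)) (\<lambda>ys. Suc (Suc (ys ! 0)))"
    unfolding approximates_def by (auto simp: length_Suc_conv)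
  ultimately show ?case by blast
next
  case (proj i n)
  then have "computable C (n + 2) (\<lambda>ys. Suc (ys ! i))"
    by (intro computable_Suc computable_proj) simp
  moreover have "approximates G n (\<lambda>xs. xs ! i) (\<lambda>ys. Suc (ys ! i))"
    using proj unfolding approximates_def by (simp add: nth_append)
  ultimately show ?case by blast
next
  case char_X
  then show ?case using join_char_approximable by (simp add: numeral_3_eq_3)
next
  case (comp m g gs n)
  from comp.IH(1) obtain Ag where "computable C (m + 2) Ag" "approximates G m g Ag" by blast
  from approximates_comp[OF this comp.hyps(2)] comp.IH(2) show ?case by blast
next
  case (prim_rec n g h)
  from prim_rec.IH obtain Ag Ah where
    "computable C (n + 2) Ag" "approximates G n g Ag" "computable C (n + 2 + 2) Ah" "approximates G (n + 2) h Ah"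
    by blast
  from approximates_prim_rec[OF this] show ?case by blast
next
  case (mu n g)
  from mu.IH obtain Ag where "computable C (n + 1 + 2) Ag" "approximates G (n + 1) g Ag" by blast
  from approximates_mu[OF this mu.hyps(2)] show ?case by blast
qed

section \<open>Countably many requirements\<close>

text \<open>Syntax for \<open>orec\<close> derivations, so that the computable functions can be enumerated.\<close>

datatype prog = Zero | Succ | Proj nat | Oracle | Comp prog "prog list" | Prim_Rec prog prog | Mu prog

instance prog :: countable
  by countable_datatype

fun eval_prog :: "nat set \<Rightarrow> prog \<Rightarrow> nat list \<Rightarrow> nat" where
  "eval_prog X Zero xs = 0"
| "eval_prog X Succ xs = Suc (hd xs)"
| "eval_prog X (Proj i) xs = xs ! i"
| "eval_prog X Oracle xs = (if hd xs \<in> X then 1 else 0)"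
| "eval_prog X (Comp p ps) xs = eval_prog X p (map (\<lambda>q. eval_prog X q xs) ps)"
| "eval_prog X (Prim_Rec p q) xs = rec_nat (eval_prog X p (tl xs)) (\<lambda>k r. eval_prog X q (k # r # tl xs)) (hd xs)"
| "eval_prog X (Mu p) xs = (LEAST y. eval_prog X p (y # xs) = 0)"

lemma orec_imp_eval_prog: "orec X n f \<Longrightarrow> \<exists>p. \<forall>xs. length xs = n \<longrightarrow> f xs = eval_prog X p xs"
proof (induction rule: orec.induct)
  case (zero n) show ?case by (rule exI[of _ Zero]) simp
next
  case succ show ?case by (rule exI[of _ Succ]) simp
next
  case (proj i n) show ?case by (rule exI[of _ "Proj i"]) simp
next
  case char_X show ?case by (rule exI[of _ Oracle]) simp
next
  case (comp m g gs n)
  obtain p where p: "\<forall>xs. length xs = m \<longrightarrow> g xs = eval_prog X p xs" using comp.IH(1) by blast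
  have "\<forall>h\<in>set gs. \<exists>q. \<forall>xs. length xs = n \<longrightarrow> h xs = eval_prog X q xs"
    using comp.IH(2) by blast
  from bchoice[OF this] obtain q where q: "\<forall>h\<in>set gs. \<forall>xs. length xs = n \<longrightarrow> h xs = eval_prog X (q h) xs"
    by blast
  have "g (map (\<lambda>h. h xs) gs) = eval_prog X (Comp p (map q gs)) xs" if "length xs = n" for xs
  proof -
    have "map (\<lambda>h. h xs) gs = map (\<lambda>q'. eval_prog X q' xs) (map q gs)" using q that by simp
    moreover have "g (map (\<lambda>h. h xs) gs) = eval_prog X p (map (\<lambda>h. h xs) gs)"
      using p comp.hyps(2) by simp
    ultimately show ?thesis by (metis eval_prog.simps(5))
  qed
  then show ?case by blast
next
  case (prim_rec n g h)
  then obtain p q where p: "\<forall>xs. length xs = n \<longrightarrow> g xs = eval_prog X p xs"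
    and q: "\<forall>xs. length xs = n + 2 \<longrightarrow> h xs = eval_prog X q xs" by blast
  have "rec_nat (g (tl xs)) (\<lambda>k r. h (k # r # tl xs)) j
      = rec_nat (eval_prog X p (tl xs)) (\<lambda>k r. eval_prog X q (k # r # tl xs)) j"
    if "length xs = n + 1" for xs j
    using that p q by (induct j) auto
  then show ?case by (intro exI[of _ "Prim_Rec p q"]) simp
next
  case (mu n g)
  then obtain p where "\<forall>xs. length xs = n + 1 \<longrightarrow> g xs = eval_prog X p xs" by blast
  then show ?case by (intro exI[of _ "Mu p"]) simp
qed

lemma computable_imp_eval_prog:
  "computable X n f \<Longrightarrow> \<exists>p. \<forall>xs. length xs = n \<longrightarrow> f xs = eval_prog X p xs"
  unfolding computable_def using orec_imp_eval_prog by metis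

lemma join_computable_approximated_by_prog:
  assumes "orec (join G C) n f"
  shows "\<exists>p. computable C (n + 2) (eval_prog C p) \<and> approximates G n f (eval_prog C p)"
proof -
  obtain A where A: "computable C (n + 2) A" "approximates G n f A"
    using orec_join_approximable[OF assms] by blast
  obtain p where p: "\<And>xs. length xs = n + 2 \<Longrightarrow> A xs = eval_prog C p xs"
    using computable_imp_eval_prog[OF A(1)] by blast
  have "computable C (n + 2) (eval_prog C p)" using computable_cong[OF A(1) p] .
  moreover have "approximates G n f (eval_prog C p)" using approximates_cong[OF A(2) p] .
  ultimately show ?thesis by blast
qed

definition matrix_of :: "str list list \<Rightarrow> nat \<Rightarrow> nat \<Rightarrow> str" where
  "matrix_of Ms i j = Ms ! i ! j"

lemma matrix_of_tabulate:
  "i < m \<Longrightarrow> j < n \<Longrightarrow> matrix_of (map (\<lambda>i. map (M i) [0..<n]) [0..<m]) i j = M i j"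
  by (simp add: matrix_of_def)

lemma matrix_cong:
  assumes "\<And>i j. i < m \<Longrightarrow> j < n \<Longrightarrow> M' i j = M i j"
  shows "valuation m n M' V \<longleftrightarrow> valuation m n M V"
    and "disjoint_matrix m n M' \<longleftrightarrow> disjoint_matrix m n M"
    and "essential m n S M' \<longleftrightarrow> essential m n S M"
  using assms unfolding valuation_def disjoint_matrix_def essential_def by auto

lemma essential_mono: "S \<subseteq> S' \<Longrightarrow> essential m n S M \<Longrightarrow> essential m n S' M"
  unfolding essential_def holds_def by blast

section \<open>Forcing \<open>\<Sigma>\<^sub>1\<close> facts with Mathias conditions\<close>

lemma set_decode_subset_lessThan_iff: "set_decode d \<subseteq> {..<u} \<longleftrightarrow> d < 2 ^ u"
proof
  show "d < 2 ^ u" if "set_decode d \<subseteq> {..<u}"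
    using that
  proof (induct u arbitrary: d)
    case 0
    then show ?case by (metis lessThan_0 less_numeral_extra(1) power_0 set_decode_inverse set_encode_empty subset_empty)
  next
    case (Suc u)
    then have "set_decode (d div 2) \<subseteq> {..<u}" by (auto simp flip: set_decode_Suc)
    with Suc.hyps have "d div 2 < 2 ^ u" .
    then show ?case by simp
  qed
  show "set_decode d \<subseteq> {..<u}" if "d < 2 ^ u"
  proof
    fix q assume "q \<in> set_decode d"
    then have "0 < d div 2 ^ q" unfolding set_decode_def by (simp add: odd_pos)
    then have "2 ^ q \<le> d" by (simp add: div_greater_zero_iff)
    with that have "(2::nat) ^ q < 2 ^ u" by (rule le_less_trans[rotated])
    then show "q \<in> {..<u}" using power_less_imp_less_exp[of 2 q u] by simp
  qed
qed

text \<open>The codes \<open>x\<close> forced into \<open>\<exists>y. f [x, y] = 0\<close> by some extension of the condition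
  \<open>(F, Y)\<close>: reading some finite \<open>D\<close> with \<open>F \<subseteq> D \<subseteq> F \<union> Y\<close> as the initial segment of \<open>G\<close>
  below \<open>u\<close>, the approximation \<open>A\<close> gives the verdict \<open>f [x, y] = 0\<close>.\<close>

definition forcing_codes :: "(nat list \<Rightarrow> nat) \<Rightarrow> nat set \<Rightarrow> nat set \<Rightarrow> nat set" where
  "forcing_codes A F Y = {x. \<exists>y d u. A [x, y, d, u] = 1 \<and> set_decode d \<subseteq> {..<u} \<and>
     F \<subseteq> set_decode d \<and> set_decode d \<subseteq> F \<union> Y}"

text \<open>For \<open>F \<subseteq> {..<c}\<close> the witnesses \<open>y, d, u\<close> can be bounded by one number \<open>w\<close> and the
  conditions on \<open>D = set_decode d\<close> checked below \<open>u + c\<close>.\<close>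

lemma forcing_codes_bounded:
  assumes c: "F \<subseteq> {..<c}"
  shows "forcing_codes A F Y = {x. \<exists>w. \<exists>y<w. \<exists>d<w. \<exists>u<w. A [x, y, d, u] = 1 \<and> d div 2 ^ u = 0 \<and>
    (\<forall>q<u + c. (q \<in> F \<longrightarrow> q \<in> set_decode d) \<and> (q \<in> set_decode d \<longrightarrow> q \<in> F \<or> q \<in> Y))}"
    (is "_ = {x. \<exists>w. \<exists>y<w. \<exists>d<w. \<exists>u<w. ?P x y d u}")
proof -
  have P_iff: "?P x y d u \<longleftrightarrow> A [x, y, d, u] = 1 \<and> set_decode d \<subseteq> {..<u} \<and> F \<subseteq> set_decode d \<and> set_decode d \<subseteq> F \<union> Y"
    for x y d u
  proof (cases "set_decode d \<subseteq> {..<u}")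
    case True
    then have "q < u + c" if "q \<in> F \<union> set_decode d" for q
      using that c by fastforce
    with True show ?thesis by (simp add: set_decode_subset_lessThan_iff div_eq_0_iff) blast
  qed (simp add: set_decode_subset_lessThan_iff div_eq_0_iff)
  have bounded: "(\<exists>y d u. ?P x y d u) \<longleftrightarrow> (\<exists>w. \<exists>y<w. \<exists>d<w. \<exists>u<w. ?P x y d u)" for x
  proof
    assume "\<exists>y d u. ?P x y d u"
    then obtain y d u where "?P x y d u" by blast
    moreover have "y < Suc (y + d + u)" "d < Suc (y + d + u)" "u < Suc (y + d + u)" by simp_all
    ultimately show "\<exists>w. \<exists>y<w. \<exists>d<w. \<exists>u<w. ?P x y d u" by blast
  qed blast
  show ?thesis by (simp only: forcing_codes_def P_iff[symmetric] bounded)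
qed

lemma sigma1_rel_forcing_codes:
  assumes A: "computable C 4 A" and F: "finite F" and Y: "decidable C 1 (\<lambda>xs. xs ! 0 \<in> Y)"
  shows "sigma1_rel C (forcing_codes A F Y)"
proof -
  obtain c where c: "F \<subseteq> {..<c}" using F finite_nat_set_iff_bounded by auto
  define between where "between = (\<lambda>qs. (qs ! 0 \<in> F \<longrightarrow> qs ! 0 \<in> set_decode (qs ! 2)) \<and>
    (qs ! 0 \<in> set_decode (qs ! 2) \<longrightarrow> qs ! 0 \<in> F \<or> qs ! 0 \<in> Y))"
  have "decidable C 6 between"
    unfolding between_def
    by (intro decidable_conj decidable_imp decidable_disj decidable_mem_set_decode decidable_mem_finite[OF F]
        decidable_unop[OF Y] computable_proj computable_const) simp_all
  then have "decidable C 5 (\<lambda>ws. \<forall>q<ws ! 0 + c. between (q # ws))"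
    by (intro decidable_ball[of C 5, simplified] computable_add computable_proj computable_const) simp_all
  text \<open>The arguments are now \<open>[u, d, y, x, w]\<close>.\<close>
  then have "decidable C 5 (\<lambda>ws. A [ws ! 3, ws ! 2, ws ! 1, ws ! 0] = 1 \<and> ws ! 1 div 2 ^ (ws ! 0) = 0
      \<and> (\<forall>q<ws ! 0 + c. between (q # ws)))"
    by (intro decidable_conj decidable_eq computable_comp4[OF A] computable_div_power2 computable_proj
        computable_const) simp_all
  from decidable_bex[of C 4, simplified, OF this computable_proj[of 3 4]]
  have "decidable C 4 (\<lambda>vs. \<exists>u<vs ! 3. A [vs ! 2, vs ! 1, vs ! 0, u] = 1 \<and> vs ! 0 div 2 ^ u = 0
      \<and> (\<forall>q<u + c. between (q # u # vs)))"
    by (simp add: numeral_eq_Suc)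
  from decidable_bex[of C 3, simplified, OF this computable_proj[of 2 3]]
  have "decidable C 3 (\<lambda>vs. \<exists>d<vs ! 2. \<exists>u<vs ! 2. A [vs ! 1, vs ! 0, d, u] = 1 \<and> d div 2 ^ u = 0
      \<and> (\<forall>q<u + c. between (q # u # d # vs)))"
    by (simp add: numeral_eq_Suc)
  from decidable_bex[of C 2, simplified, OF this computable_proj[of 1 2]]
  have "decidable C 2 (\<lambda>vs. \<exists>y<vs ! 1. \<exists>d<vs ! 1. \<exists>u<vs ! 1. A [vs ! 0, y, d, u] = 1 \<and> d div 2 ^ u = 0
      \<and> (\<forall>q<u + c. between (q # u # d # y # vs)))"
    by (simp add: numeral_eq_Suc)
  from sigma1_rel_decidable[OF this] show ?thesis
    unfolding forcing_codes_bounded[OF c] by (simp add: between_def)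
qed

lemma zeros_subset_forcing_codes:
  assumes A: "approximates G 2 f A" and F: "finite F" "F \<subseteq> G" and Y: "G - F \<subseteq> Y"
  shows "{x. \<exists>y. f [x, y] = 0} \<subseteq> forcing_codes A F Y"
proof
  fix x assume "x \<in> {x. \<exists>y. f [x, y] = 0}"
  then obtain y where y: "f [x, y] = 0" by blast
  obtain c where c: "F \<subseteq> {..<c}" using F(1) finite_nat_set_iff_bounded by auto
  have len: "length [x, y] = 2" by simp
  have "\<forall>\<^sub>F u in sequentially. A [x, y, initial_code G u, u] = 1 \<and> c \<le> u"
    using approximatesD(2)[OF A len] eventually_ge_at_top[of c] by eventually_elim (simp add: y)
  then obtain u where u: "A [x, y, initial_code G u, u] = 1" "c \<le> u"
    unfolding eventually_sequentially by blast
  have "F \<subseteq> set_decode (initial_code G u)" using F(2) c u(2) by auto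
  moreover have "set_decode (initial_code G u) \<subseteq> F \<union> Y" using Y by auto
  ultimately show "x \<in> forcing_codes A F Y"
    unfolding forcing_codes_def using u(1) by (intro CollectI exI conjI) auto
qed

section \<open>The construction of the cohesive set\<close>

definition condition :: "nat set \<Rightarrow> nat set \<times> nat set \<Rightarrow> bool" where
  "condition C P \<longleftrightarrow> finite (fst P) \<and> infinite (snd P) \<and> decidable C 1 (\<lambda>xs. xs ! 0 \<in> snd P)
     \<and> (\<forall>x\<in>snd P. \<forall>y\<in>fst P. y < x)"

definition extends :: "nat set \<times> nat set \<Rightarrow> nat set \<times> nat set \<Rightarrow> bool" where
  "extends Q P \<longleftrightarrow> fst P \<subseteq> fst Q \<and> fst Q - fst P \<subseteq> snd P \<and> snd Q \<subseteq> snd P"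

lemma extends_refl: "extends P P"
  unfolding extends_def by auto

lemma extends_trans: "extends R Q \<Longrightarrow> extends Q P \<Longrightarrow> extends R P"
  unfolding extends_def by auto

locale cohesive_construction =
  fixes C :: "nat set" and R :: "nat \<Rightarrow> nat set" and k :: nat and A0 A1 :: "str set"
  assumes C_fair: "n_fair k C A0 A1" and R_computable: "unif_computable C R"
begin

lemma decidable_mem_R: "decidable C 1 (\<lambda>xs. xs ! 0 \<in> R e)"
proof -
  obtain f where f: "orec C 2 f" "\<forall>i x. f [i, x] = (if x \<in> R i then 1 else 0)"
    using R_computable unfolding unif_computable_def by blast
  have "computable C 1 (\<lambda>xs. f [e, xs ! 0])"
    by (rule computable_comp2[OF orec_imp_computable[OF f(1)] computable_const computable_proj]) simp
  then show ?thesis unfolding decidable_def using f(2) by simp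
qed

definition choose_side :: "nat \<Rightarrow> nat set \<times> nat set \<Rightarrow> nat set \<times> nat set" where
  "choose_side e P = (if infinite (snd P \<inter> R e) then (fst P, snd P \<inter> R e) else (fst P, snd P - R e))"

definition add_least :: "nat set \<times> nat set \<Rightarrow> nat set \<times> nat set" where
  "add_least P = (insert (Least (\<lambda>x. x \<in> snd P)) (fst P), {x\<in>snd P. Least (\<lambda>x. x \<in> snd P) < x})"

text \<open>A requirement \<open>(p, m, Ms)\<close> is a program \<open>p\<close>, meant to approximate the matrix \<open>f\<close> of a
  \<open>\<Sigma>\<^sub>1\<close> formula \<open>{x. \<exists>y. f [x, y] = 0}\<close> relative to \<open>G \<oplus> C\<close>, and an \<open>m\<close>-row matrix,
  given as a list of rows so that the requirements can be enumerated.\<close>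

definition essential_requirement :: "prog \<Rightarrow> nat \<Rightarrow> str list list \<Rightarrow> nat set \<times> nat set \<Rightarrow> bool" where
  "essential_requirement p m Ms P \<longleftrightarrow> computable C 4 (eval_prog C p)
     \<and> disjoint_matrix m (2 ^ k * m) (matrix_of Ms)
     \<and> essential m (2 ^ k * m) (forcing_codes (eval_prog C p) (fst P) (snd P)) (matrix_of Ms)"

definition forcing_extension :: "prog \<Rightarrow> nat \<Rightarrow> str list list \<Rightarrow> nat set \<times> nat set \<Rightarrow> nat \<times> nat \<Rightarrow> bool" where
  "forcing_extension p m Ms P du \<longleftrightarrow> (case du of (d, u) \<Rightarrow> \<exists>V y.
     valuation m (2 ^ k * m) (matrix_of Ms) V \<and> diagonalizes m (2 ^ k * m) V A0 A1
     \<and> eval_prog C p [val_code m (2 ^ k * m) V, y, d, u] = 1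
     \<and> set_decode d \<subseteq> {..<u} \<and> fst P \<subseteq> set_decode d \<and> set_decode d \<subseteq> fst P \<union> snd P)"

definition meet_requirement :: "prog \<times> nat \<times> str list list \<Rightarrow> nat set \<times> nat set \<Rightarrow> nat set \<times> nat set" where
  "meet_requirement r P = (case r of (p, m, Ms) \<Rightarrow>
     if essential_requirement p m Ms P
     then (case SOME du. forcing_extension p m Ms P du of (d, u) \<Rightarrow> (set_decode d, {x\<in>snd P. u \<le> x}))
     else P)"

lemma condition_choose_side:
  assumes "condition C P"
  shows "condition C (choose_side e P)"
proof (cases "infinite (snd P \<inter> R e)")
  case True
  have "decidable C 1 (\<lambda>xs. xs ! 0 \<in> snd P \<and> xs ! 0 \<in> R e)"
    using assms unfolding condition_def by (intro decidable_conj decidable_mem_R) auto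
  then show ?thesis using True assms unfolding condition_def choose_side_def by auto
next
  case False
  have "infinite (snd P - (snd P \<inter> R e))"
    using False assms unfolding condition_def by (intro Diff_infinite_finite) auto
  moreover have "decidable C 1 (\<lambda>xs. xs ! 0 \<in> snd P \<and> xs ! 0 \<notin> R e)"
    using assms unfolding condition_def by (intro decidable_conj decidable_not decidable_mem_R) auto
  ultimately show ?thesis using False assms unfolding condition_def choose_side_def by (auto simp: Diff_Int)
qed

lemma extends_choose_side: "extends (choose_side e P) P"
  unfolding extends_def choose_side_def by auto

lemma condition_Least_mem: "condition C P \<Longrightarrow> Least (\<lambda>x. x \<in> snd P) \<in> snd P"
  unfolding condition_def by (metis LeastI finite.emptyI ex_in_conv)

lemma condition_add_least:
  assumes "condition C P"
  shows "condition C (add_least P)"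
proof -
  let ?l = "Least (\<lambda>x. x \<in> snd P)"
  have l: "?l \<in> snd P" using assms by (rule condition_Least_mem)
  have "{x\<in>snd P. ?l < x} = snd P - {..?l}" by auto
  then have "infinite {x\<in>snd P. ?l < x}" using assms unfolding condition_def by (simp add: Diff_infinite_finite)
  moreover have "decidable C 1 (\<lambda>xs. xs ! 0 \<in> snd P \<and> ?l < xs ! 0)"
    using assms unfolding condition_def by (intro decidable_conj decidable_less computable_const computable_proj) auto
  ultimately show ?thesis using assms l unfolding condition_def add_least_def by auto
qed

lemma extends_add_least:
  assumes "condition C P"
  shows "extends (add_least P) P"
  using condition_Least_mem[OF assms] unfolding extends_def add_least_def by auto

lemma meet_requirement_forces:
  assumes P: "condition C P" and ess: "essential_requirement p m Ms P"
  shows "\<exists>d u. forcing_extension p m Ms P (d, u) \<and> meet_requirement (p, m, Ms) P = (set_decode d, {x\<in>snd P. u \<le> x})"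
proof -
  let ?n = "2 ^ k * m" and ?S = "forcing_codes (eval_prog C p) (fst P) (snd P)"
  have "sigma1_rel C ?S"
    using P ess unfolding condition_def essential_requirement_def by (intro sigma1_rel_forcing_codes) auto
  with C_fair ess obtain V where "valuation m ?n (matrix_of Ms) V" "diagonalizes m ?n V A0 A1" "holds m ?n ?S V"
    unfolding n_fair_def essential_requirement_def by blast
  then have "\<exists>du. forcing_extension p m Ms P du"
    unfolding holds_def forcing_codes_def forcing_extension_def by blast
  then have "forcing_extension p m Ms P (SOME du. forcing_extension p m Ms P du)" by (rule someI_ex)
  then show ?thesis
    using ess unfolding meet_requirement_def by (auto split: prod.split) blast
qed

lemma condition_meet_requirement:
  assumes P: "condition C P"
  shows "condition C (meet_requirement r P)"
proof -
  obtain p m Ms where r: "r = (p, m, Ms)" by (cases r) auto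
  show ?thesis
  proof (cases "essential_requirement p m Ms P")
    case True
    from meet_requirement_forces[OF P True] obtain d u where
      d: "set_decode d \<subseteq> {..<u}" "set_decode d \<subseteq> fst P \<union> snd P"
      and meet: "meet_requirement (p, m, Ms) P = (set_decode d, {x\<in>snd P. u \<le> x})"
      unfolding forcing_extension_def by auto
    have "{x\<in>snd P. u \<le> x} = snd P - {..<u}" by auto
    then have "infinite {x\<in>snd P. u \<le> x}" using P unfolding condition_def by (simp add: Diff_infinite_finite)
    moreover have "decidable C 1 (\<lambda>xs. xs ! 0 \<in> snd P \<and> \<not> xs ! 0 < u)"
      using P unfolding condition_def by (intro decidable_conj decidable_not decidable_less computable_const computable_proj) auto
    ultimately show ?thesis using d unfolding r meet condition_def by (auto simp: not_less)
  next
    case False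
    then show ?thesis using P by (simp add: r meet_requirement_def)
  qed
qed

lemma extends_meet_requirement:
  assumes P: "condition C P"
  shows "extends (meet_requirement r P) P"
proof -
  obtain p m Ms where r: "r = (p, m, Ms)" by (cases r) auto
  show ?thesis
  proof (cases "essential_requirement p m Ms P")
    case True
    from meet_requirement_forces[OF P True] show ?thesis
      unfolding r extends_def forcing_extension_def by auto
  next
    case False
    then show ?thesis by (simp add: r meet_requirement_def extends_refl)
  qed
qed

primrec stage :: "nat \<Rightarrow> nat set \<times> nat set" where
  "stage 0 = ({}, UNIV)"
| "stage (Suc s) = meet_requirement (from_nat s) (add_least (choose_side s (stage s)))"

lemma condition_stage: "condition C (stage s)"
proof (induct s)
  case 0
  have "decidable C 1 (\<lambda>xs. xs ! 0 \<in> (UNIV :: nat set))" using decidable_True by simp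
  then show ?case unfolding condition_def by simp
next
  case (Suc s)
  then show ?case by (simp add: condition_meet_requirement condition_add_least condition_choose_side)
qed

lemma stage_Suc_extends_choose_side: "extends (stage (Suc s)) (choose_side s (stage s))"
  and add_least_choose_side_extends_stage: "extends (add_least (choose_side s (stage s))) (stage s)"
  and stage_Suc_extends_add_least: "extends (stage (Suc s)) (add_least (choose_side s (stage s)))"
proof -
  have P: "condition C (choose_side s (stage s))" by (rule condition_choose_side[OF condition_stage])
  show "extends (stage (Suc s)) (add_least (choose_side s (stage s)))"
    using extends_meet_requirement[OF condition_add_least[OF P]] by simp
  then show "extends (stage (Suc s)) (choose_side s (stage s))"
    using extends_add_least[OF P] extends_trans by blast
  show "extends (add_least (choose_side s (stage s))) (stage s)"
    using extends_add_least[OF P] extends_choose_side extends_trans by blast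
qed

lemma extends_stage: "s \<le> t \<Longrightarrow> extends (stage t) (stage s)"
proof (induct t rule: dec_induct)
  case base
  then show ?case by (rule extends_refl)
next
  case (step t)
  then show ?case using stage_Suc_extends_choose_side extends_choose_side extends_trans by blast
qed

definition G :: "nat set" where
  "G = (\<Union>s. fst (stage s))"

lemma G_respects_condition:
  assumes "extends P (stage s)" "extends (stage (Suc s)) P"
  shows "fst P \<subseteq> G" "G - fst P \<subseteq> snd P"
proof -
  show "fst P \<subseteq> G" using assms(2) unfolding G_def extends_def by blast
  show "G - fst P \<subseteq> snd P"
  proof
    fix x assume x: "x \<in> G - fst P"
    then obtain t where t: "x \<in> fst (stage t)" unfolding G_def by auto
    show "x \<in> snd P"
    proof (cases "t \<le> s")
      case True
      then show ?thesis using x t assms(1) extends_stage[of t s] unfolding extends_def by auto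
    next
      case False
      then have "extends (stage t) P" using assms(2) extends_stage[of "Suc s" t] extends_trans by auto
      then show ?thesis using x t unfolding extends_def by auto
    qed
  qed
qed

lemma G_almost_in_or_out: "finite (G - R e) \<or> finite (G - - R e)"
proof -
  let ?P = "choose_side e (stage e)"
  have G_P: "G - fst ?P \<subseteq> snd ?P"
    by (rule G_respects_condition[OF extends_choose_side stage_Suc_extends_choose_side])
  have fin: "finite (fst ?P)"
    using condition_choose_side[OF condition_stage] unfolding condition_def by blast
  have "snd ?P \<subseteq> R e \<or> snd ?P \<subseteq> - R e"
    unfolding choose_side_def by auto
  then have "G - R e \<subseteq> fst ?P \<or> G - - R e \<subseteq> fst ?P" using G_P by blast
  then show ?thesis using fin finite_subset by blast
qed

lemma card_stage: "s \<le> card (fst (stage s))"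
proof (induct s)
  case 0
  then show ?case by simp
next
  case (Suc s)
  let ?Q = "choose_side s (stage s)"
  have Q: "condition C ?Q" by (rule condition_choose_side[OF condition_stage])
  then have "Least (\<lambda>x. x \<in> snd ?Q) \<in> snd ?Q" by (rule condition_Least_mem)
  then have "Least (\<lambda>x. x \<in> snd ?Q) \<notin> fst ?Q" using Q unfolding condition_def by blast
  then have "card (fst (add_least ?Q)) = Suc (card (fst (stage s)))"
    using Q unfolding condition_def add_least_def by (simp add: choose_side_def)
  moreover have "card (fst (add_least ?Q)) \<le> card (fst (stage (Suc s)))"
    using stage_Suc_extends_add_least[of s] condition_stage[of "Suc s"] unfolding extends_def condition_def
    by (intro card_mono) auto
  ultimately show ?case using Suc by simp
qed

lemma infinite_G: "infinite G"
proof
  assume "finite G"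
  moreover have "fst (stage (Suc (card G))) \<subseteq> G" unfolding G_def by blast
  ultimately have "card (fst (stage (Suc (card G)))) \<le> card G" by (rule card_mono)
  with card_stage[of "Suc (card G)"] show False by simp
qed

lemma cohesive_G: "cohesive R G"
  unfolding cohesive_def using infinite_G G_almost_in_or_out by blast

lemma initial_code_G:
  assumes "fst (stage t) = set_decode d" "snd (stage t) \<subseteq> {u..}" "set_decode d \<subseteq> {..<u}"
  shows "initial_code G u = d"
proof -
  have "fst (stage t) \<subseteq> G" "G - fst (stage t) \<subseteq> snd (stage t)"
    by (rule G_respects_condition[OF extends_refl extends_stage]; simp)+
  with assms have "G \<inter> {..<u} = set_decode d" by auto
  then show ?thesis unfolding initial_code_def by simp
qed

lemma requirement_stage:
  "\<exists>P. condition C P \<and> fst P \<subseteq> G \<and> G - fst P \<subseteq> snd P \<and> stage (Suc (to_nat r)) = meet_requirement r P"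
proof (intro exI conjI)
  let ?s = "to_nat r"
  show "condition C (add_least (choose_side ?s (stage ?s)))"
    by (rule condition_add_least[OF condition_choose_side[OF condition_stage]])
  show "fst (add_least (choose_side ?s (stage ?s))) \<subseteq> G"
    and "G - fst (add_least (choose_side ?s (stage ?s))) \<subseteq> snd (add_least (choose_side ?s (stage ?s)))"
    by (rule G_respects_condition[OF add_least_choose_side_extends_stage stage_Suc_extends_add_least])+
  show "stage (Suc ?s) = meet_requirement r (add_least (choose_side ?s (stage ?s)))"
    by simp
qed

lemma n_fair_join_G: "n_fair k (join G C) A0 A1"
  unfolding n_fair_def
proof (intro allI impI)
  fix m :: nat and S :: "nat set" and M :: "nat \<Rightarrow> nat \<Rightarrow> str"
  let ?n = "2 ^ k * m"
  assume S: "sigma1_rel (join G C) S" and M: "disjoint_matrix m ?n M" and ess: "essential m ?n S M"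
  obtain f where f: "orec (join G C) 2 f" and S_eq: "S = {x. \<exists>y. f [x, y] = 0}"
    using S unfolding sigma1_rel_def by blast
  from join_computable_approximated_by_prog[OF f] obtain p
    where p_computable: "computable C 4 (eval_prog C p)" and p_approximates: "approximates G 2 f (eval_prog C p)"
    by auto
  define Ms where "Ms = map (\<lambda>i. map (M i) [0..<?n]) [0..<m]"
  have Ms: "\<And>i j. i < m \<Longrightarrow> j < ?n \<Longrightarrow> matrix_of Ms i j = M i j"
    unfolding Ms_def by (rule matrix_of_tabulate)
  obtain P where P: "condition C P" "fst P \<subseteq> G" "G - fst P \<subseteq> snd P"
    and stage_P: "stage (Suc (to_nat (p, m, Ms))) = meet_requirement (p, m, Ms) P"
    using requirement_stage by blast
  have "S \<subseteq> forcing_codes (eval_prog C p) (fst P) (snd P)"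
    unfolding S_eq using P unfolding condition_def by (intro zeros_subset_forcing_codes[OF p_approximates]) auto
  from essential_mono[OF this ess] have "essential_requirement p m Ms P"
    unfolding essential_requirement_def using p_computable M by (simp add: matrix_cong[OF Ms])
  from meet_requirement_forces[OF P(1) this] obtain d u where
    extension: "forcing_extension p m Ms P (d, u)"
    and stage_d: "stage (Suc (to_nat (p, m, Ms))) = (set_decode d, {x\<in>snd P. u \<le> x})"
    unfolding stage_P by blast
  from extension obtain V y where V: "valuation m ?n M V" "diagonalizes m ?n V A0 A1"
    and forced: "eval_prog C p [val_code m ?n V, y, d, u] = 1" and d: "set_decode d \<subseteq> {..<u}"
    unfolding forcing_extension_def prod.case by (auto simp: matrix_cong[OF Ms])
  have "initial_code G u = d" by (rule initial_code_G[of "Suc (to_nat (p, m, Ms))", OF _ _ d])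
      (auto simp: stage_d simp del: stage.simps)
  with forced approximatesD(1)[OF p_approximates, of "[val_code m ?n V, y]" u]
  have "f [val_code m ?n V, y] = 0" by simp
  then have "holds m ?n S V" unfolding holds_def S_eq by blast
  with V show "\<exists>V. valuation m ?n M V \<and> diagonalizes m ?n V A0 A1 \<and> holds m ?n S V" by blast
qed

end

theorem mainTheorem9:
  fixes A0 A1 :: "bool list set" and C :: "nat set" and R :: "nat \<Rightarrow> nat set"
  assumes "fair C A0 A1"
    and "unif_computable C R"
  shows "\<exists>G. cohesive R G \<and> fair (join G C) A0 A1"
proof -
  obtain k where k: "k \<ge> 1" "n_fair k C A0 A1" using assms(1) unfolding fair_def by blast
  interpret cohesive_construction C R k A0 A1 using k(2) assms(2) by unfold_locales
  show ?thesis using cohesive_G n_fair_join_G k(1) unfolding fair_def by blast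
qed

end
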